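(* Let $X$ be a complex vector space with $\dim_{\mathbb{C}}X\ge2$ and $Y\ne\{0\}$ a sequentially complete Hausdorff complex locally convex space. Let $\Omega\subset X$ be a polygonally connected $2$-open set, $f\in\mathcal{H}_G(\Omega,Y)$, and $p$ a continuous seminorm on $Y$ with $p\not\equiv0$. If $c\in\Omega$ is a $\tau_{(1)}$-local maximum of $p\circ f$, then $c$ is a global minimum of $p\circ f$ on $\Omega$ and the closure of $f(\Omega)$ has empty interior in $Y$. In particular, if $p(f(c))>0$ then $0\notin f(\Omega)$.
   Context: $\Gamma_{1,d}(X)$: complex affine subspaces of $X$ of dimension $1,\dots,d$, with Euclidean topology. $A\subset X$ is $d$-open if $A\cap L$ is open in $L$ for all $L\in\Gamma_{1,d}(X)$. $\tau_{(1)}$ is the topology on $X$ whose open sets are the $1$-open sets. Polygonally connected: any two points can be joined by a polygonal chain within the set. $\mathcal{H}_G(\Omega,Y)$: Gâteaux holomorphic maps, i.e. for all $a\in\Omega$, $v\in X$, $\varphi\in Y^*$, $\lambda\mapsto\varphi(f(a+\lambda v))$ is holomorphic on some disc around $0$. *)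

theory Defs
  imports "HOL-Analysis.Analysis"
begin

definition seminorm_on :: "(complex \<Rightarrow> 'y \<Rightarrow> 'y) \<Rightarrow> ('y::ab_group_add \<Rightarrow> real) \<Rightarrow> bool" where
  "seminorm_on sY p \<longleftrightarrow>
     (\<forall>y. 0 \<le> p y) \<and> (\<forall>c y. p (sY c y) = cmod c * p y) \<and> (\<forall>y z. p (y + z) \<le> p y + p z)"

definition lcs_topology :: "'i set \<Rightarrow> ('i \<Rightarrow> 'y::ab_group_add \<Rightarrow> real) \<Rightarrow> 'y topology" where
  "lcs_topology I P = topology (\<lambda>U. \<forall>y\<in>U. \<exists>F e. finite F \<and> F \<subseteq> I \<and> e > 0 \<and>
        {z. \<forall>i\<in>F. P i (z - y) < e} \<subseteq> U)"

definition lcs :: "(complex \<Rightarrow> 'y \<Rightarrow> 'y) \<Rightarrow> 'i set \<Rightarrow> ('i \<Rightarrow> 'y::ab_group_add \<Rightarrow> real) \<Rightarrow> bool" where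
  "lcs sY I P \<longleftrightarrow> Vector_Spaces.vector_space sY \<and> (\<forall>i\<in>I. seminorm_on sY (P i))"

definition seq_complete_lcs :: "'i set \<Rightarrow> ('i \<Rightarrow> 'y::ab_group_add \<Rightarrow> real) \<Rightarrow> bool" where
  "seq_complete_lcs I P \<longleftrightarrow>
     (\<forall>s :: nat \<Rightarrow> 'y. (\<forall>i\<in>I. \<forall>e>0. \<exists>N. \<forall>m\<ge>N. \<forall>n\<ge>N. P i (s m - s n) < e)
        \<longrightarrow> (\<exists>l. limitin (lcs_topology I P) s l sequentially))"

definition dual_space :: "(complex \<Rightarrow> 'y \<Rightarrow> 'y) \<Rightarrow> 'i set \<Rightarrow> ('i \<Rightarrow> 'y::ab_group_add \<Rightarrow> real)
     \<Rightarrow> ('y \<Rightarrow> complex) set" where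
  "dual_space sY I P = {\<phi>. Vector_Spaces.linear sY (*) \<phi> \<and>
       continuous_map (lcs_topology I P) euclidean \<phi>}"

definition one_open :: "(complex \<Rightarrow> 'x \<Rightarrow> 'x) \<Rightarrow> ('x::ab_group_add) set \<Rightarrow> bool" where
  "one_open sX A \<longleftrightarrow> (\<forall>a v. v \<noteq> 0 \<longrightarrow> open {z::complex. a + sX z v \<in> A})"

definition two_open :: "(complex \<Rightarrow> 'x \<Rightarrow> 'x) \<Rightarrow> ('x::ab_group_add) set \<Rightarrow> bool" where
  "two_open sX A \<longleftrightarrow> one_open sX A \<and>
     (\<forall>a u v. u \<noteq> v \<and> \<not> module.dependent sX {u, v} \<longrightarrow>
        open {w::complex \<times> complex. a + sX (fst w) u + sX (snd w) v \<in> A})"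

definition polygonally_connected :: "(complex \<Rightarrow> 'x \<Rightarrow> 'x) \<Rightarrow> ('x::ab_group_add) set \<Rightarrow> bool" where
  "polygonally_connected sX A \<longleftrightarrow>
     (\<forall>x\<in>A. \<forall>y\<in>A. \<exists>xs. xs \<noteq> [] \<and> hd xs = x \<and> last xs = y \<and>
        (\<forall>k < length xs - 1. \<forall>t::real. 0 \<le> t \<and> t \<le> 1 \<longrightarrow>
            xs ! k + sX (complex_of_real t) (xs ! Suc k - xs ! k) \<in> A))"

definition gateaux_holomorphic ::
  "(complex \<Rightarrow> 'x \<Rightarrow> 'x) \<Rightarrow> (complex \<Rightarrow> 'y \<Rightarrow> 'y) \<Rightarrow> 'i set \<Rightarrow> ('i \<Rightarrow> 'y::ab_group_add \<Rightarrow> real)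
     \<Rightarrow> ('x::ab_group_add) set \<Rightarrow> ('x \<Rightarrow> 'y) \<Rightarrow> bool" where
  "gateaux_holomorphic sX sY I P \<Omega> f \<longleftrightarrow>
     (\<forall>a\<in>\<Omega>. \<forall>v. \<forall>\<phi>\<in>dual_space sY I P. \<exists>r>0. (\<forall>z\<in>ball 0 r. a + sX z v \<in> \<Omega>) \<and>
        (\<lambda>z. \<phi> (f (a + sX z v))) holomorphic_on ball 0 r)"

end

theory Submission
  imports Defs "HOL-Complex_Analysis.Complex_Analysis"
begin

text \<open>Let \<phi> be a continuous complex-linear functional with |\<phi>| \<le> p and |\<phi> (f c)| = p (f c).
  Then \<phi> \<circ> f is holomorphic on every complex line, and |\<phi> \<circ> f| has a local maximum at c on
  each line through c, so \<phi> \<circ> f is constant near c along every line. Analytic continuation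
  along the edges of a polygonal path spreads this to all of \<Omega>; 2-openness is what allows the
  direction of an edge to be perturbed. A Hahn-Banach functional norming f c (or f x, when
  p (f c) = 0) then shows that p \<circ> f \<ge> p (f c) on \<Omega> and that f(\<Omega>) lies in a closed affine
  hyperplane, respectively in the kernel of p; neither contains a seminorm ball, because
  seminorm balls are absorbing.\<close>

locale real_seminormed_space = vector_space scale
  for scale :: "real \<Rightarrow> 'y::ab_group_add \<Rightarrow> 'y" +
  fixes p :: "'y \<Rightarrow> real"
  assumes p_nonneg: "0 \<le> p y"
    and p_scale: "p (scale r y) = \<bar>r\<bar> * p y"
    and p_triangle: "p (y + z) \<le> p y + p z"
begin

lemma p_zero: "p 0 = 0"
  using p_scale[of 0 0] by simp

text \<open>Partial linear functionals are encoded by their graphs, so that extension is inclusion.\<close>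
definition dominated_graphs :: "'y \<Rightarrow> ('y \<times> real) set set" where
  "dominated_graphs y1 = {G. (\<forall>x a b. (x, a) \<in> G \<longrightarrow> (x, b) \<in> G \<longrightarrow> a = b)
     \<and> (\<forall>x a y b. (x, a) \<in> G \<longrightarrow> (y, b) \<in> G \<longrightarrow> (x + y, a + b) \<in> G)
     \<and> (\<forall>x a r. (x, a) \<in> G \<longrightarrow> (scale r x, r * a) \<in> G)
     \<and> (\<forall>x a. (x, a) \<in> G \<longrightarrow> a \<le> p x) \<and> (y1, p y1) \<in> G}"

lemma dominated_graphsD:
  assumes "G \<in> dominated_graphs y1"
  shows "(x, a) \<in> G \<Longrightarrow> (x, b) \<in> G \<Longrightarrow> a = b"
    and "(x, a) \<in> G \<Longrightarrow> (y, b) \<in> G \<Longrightarrow> (x + y, a + b) \<in> G"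
    and "(x, a) \<in> G \<Longrightarrow> (scale r x, r * a) \<in> G"
    and "(x, a) \<in> G \<Longrightarrow> a \<le> p x"
    and "(y1, p y1) \<in> G"
  using assms unfolding dominated_graphs_def by blast+

lemma zero_in_dominated_graph: "G \<in> dominated_graphs y1 \<Longrightarrow> (0, 0) \<in> G"
  using dominated_graphsD(3)[of G y1 y1 "p y1" 0] dominated_graphsD(5)[of G y1] by simp

lemma line_graph_in_dominated_graphs: "range (\<lambda>r. (scale r y1, r * p y1)) \<in> dominated_graphs y1"
proof -
  have unique: "r * p y1 = s * p y1" if "scale r y1 = scale s y1" for r s
  proof -
    have "scale (r - s) y1 = 0" using that by (simp add: scale_left_diff_distrib)
    then show ?thesis using p_zero by auto
  qed
  have "r * p y1 \<le> p (scale r y1)" for r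
    using p_nonneg[of y1] by (simp add: p_scale mult_right_mono)
  then show ?thesis
    unfolding dominated_graphs_def
    by (auto simp: unique scale_left_distrib distrib_right intro: range_eqI[of _ _ 1]
        range_eqI[of _ _ "_ + _"] range_eqI[of _ _ "_ * _"])
qed

lemma Union_chain_in_dominated_graphs:
  assumes C: "C \<in> chains (dominated_graphs y1)" "C \<noteq> {}"
  shows "\<Union>C \<in> dominated_graphs y1"
proof -
  have sub: "C \<subseteq> dominated_graphs y1" using C chainsD2 by blast
  have common: "\<exists>G\<in>C. A \<subseteq> G \<and> B \<subseteq> G" if "A \<in> C" "B \<in> C" for A B
    using chainsD[OF C(1) that] that by blast
  show ?thesis unfolding dominated_graphs_def
  proof (intro CollectI conjI allI impI)
    fix x a y b assume "(x, a) \<in> \<Union>C" "(y, b) \<in> \<Union>C"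
    then obtain G where "G \<in> C" "(x, a) \<in> G" "(y, b) \<in> G" using common by blast
    then show "(x + y, a + b) \<in> \<Union>C" using dominated_graphsD(2)[of G] sub by blast
  next
    fix x a b assume "(x, a) \<in> \<Union>C" "(x, b) \<in> \<Union>C"
    then obtain G where "G \<in> C" "(x, a) \<in> G" "(x, b) \<in> G" using common by blast
    then show "a = b" using dominated_graphsD(1)[of G] sub by blast
  next
    fix x a r assume "(x, a) \<in> \<Union>C"
    then show "(scale r x, r * a) \<in> \<Union>C" using dominated_graphsD(3)[of _ y1] sub by blast
  next
    fix x a assume "(x, a) \<in> \<Union>C"
    then show "a \<le> p x" using dominated_graphsD(4)[of _ y1] sub by blast
  next
    show "(y1, p y1) \<in> \<Union>C" using C(2) dominated_graphsD(5) sub by blast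
  qed
qed

lemma dominated_graph_extension_value:
  assumes M: "M \<in> dominated_graphs y1"
  obtains c where "\<And>z a. (z, a) \<in> M \<Longrightarrow> a - p (z - x0) \<le> c"
    and "\<And>w b. (w, b) \<in> M \<Longrightarrow> c \<le> p (w + x0) - b"
proof -
  define A where "A = {a - p (z - x0) | z a. (z, a) \<in> M}"
  have sep: "a - p (z - x0) \<le> p (w + x0) - b" if "(z, a) \<in> M" "(w, b) \<in> M" for z a w b
  proof -
    have "a + b \<le> p ((z - x0) + (w + x0))" using dominated_graphsD(2,4)[OF M] that by simp
    then show ?thesis using p_triangle[of "z - x0" "w + x0"] by linarith
  qed
  have "A \<noteq> {}" using zero_in_dominated_graph[OF M] unfolding A_def by blast
  moreover have "bdd_above A"
    using sep zero_in_dominated_graph[OF M] unfolding A_def bdd_above_def by blast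
  ultimately show thesis
    by (intro that[of "Sup A"] cSup_upper cSup_least) (auto simp: A_def sep)
qed

lemma extended_graph_dominated:
  assumes M: "M \<in> dominated_graphs y1"
    and lower: "\<And>z a. (z, a) \<in> M \<Longrightarrow> a - p (z - x0) \<le> c"
    and upper: "\<And>w b. (w, b) \<in> M \<Longrightarrow> c \<le> p (w + x0) - b"
    and yb: "(y, b) \<in> M"
  shows "b + t * c \<le> p (y + scale t x0)"
proof (cases t "0::real" rule: linorder_cases)
  case equal
  then show ?thesis using dominated_graphsD(4)[OF M yb] by simp
next
  case greater
  have "c \<le> p (scale (1 / t) y + x0) - b / t"
    using upper[OF dominated_graphsD(3)[OF M yb, of "1 / t"]] by simp
  then have "t * c \<le> t * p (scale (1 / t) y + x0) - b"
    using greater by (simp add: field_simps)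
  also have "t * p (scale (1 / t) y + x0) = p (scale t (scale (1 / t) y + x0))"
    using greater by (simp add: p_scale)
  also have "scale t (scale (1 / t) y + x0) = y + scale t x0"
    using greater by (simp add: scale_right_distrib)
  finally show ?thesis by simp
next
  case less
  have "b / (- t) - p (scale (1 / (- t)) y - x0) \<le> c"
    using lower[OF dominated_graphsD(3)[OF M yb, of "1 / (- t)"]] by simp
  then have "b - (- t) * p (scale (1 / (- t)) y - x0) \<le> (- t) * c"
    using less by (simp add: field_simps)
  also have "(- t) * p (scale (1 / (- t)) y - x0) = p (scale (- t) (scale (1 / (- t)) y - x0))"
    using less by (simp only: p_scale abs_of_pos neg_0_less_iff_less)
  also have "scale (- t) (scale (1 / (- t)) y - x0) = y + scale t x0"
    using less by (simp add: scale_right_diff_distrib)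
  finally show ?thesis by simp
qed

lemma extension_coefficient_unique:
  assumes M: "M \<in> dominated_graphs y1" and x0: "\<And>a. (x0, a) \<notin> M"
    and "(y, a) \<in> M" "(z, b) \<in> M" and eq: "y + scale t x0 = z + scale s x0"
  shows "t = s"
proof (rule ccontr)
  assume "t \<noteq> s"
  have "(y + scale (-1) z, a + (-1) * b) \<in> M"
    using dominated_graphsD(2,3)[OF M] assms(3,4) by blast
  then have "(scale (1 / (s - t)) (y - z), (a - b) / (s - t)) \<in> M"
    using dominated_graphsD(3)[OF M, of _ _ "1 / (s - t)"] by simp
  moreover have "y - z = scale (s - t) x0"
    using eq by (simp add: scale_left_diff_distrib algebra_simps)
  ultimately show False using x0 \<open>t \<noteq> s\<close> by simp
qed

lemma dominated_graph_extend:
  assumes M: "M \<in> dominated_graphs y1" and x0: "\<And>a. (x0, a) \<notin> M"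
  shows "\<exists>M'\<in>dominated_graphs y1. M \<subset> M'"
proof -
  obtain c where lower: "\<And>z a. (z, a) \<in> M \<Longrightarrow> a - p (z - x0) \<le> c"
    and upper: "\<And>w b. (w, b) \<in> M \<Longrightarrow> c \<le> p (w + x0) - b"
    using dominated_graph_extension_value[OF M] by blast
  define M' where "M' = {(y + scale t x0, b + t * c) | y b t. (y, b) \<in> M}"
  have inM': "(y + scale t x0, b + t * c) \<in> M'" if "(y, b) \<in> M" for y b t
    using that unfolding M'_def by blast
  have "M' \<in> dominated_graphs y1" unfolding dominated_graphs_def
  proof (intro CollectI conjI allI impI)
    fix x a b assume "(x, a) \<in> M'" "(x, b) \<in> M'"
    then obtain y1' b1 t1 y2 b2 t2 where e: "x = y1' + scale t1 x0" "a = b1 + t1 * c" "(y1', b1) \<in> M"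
      "x = y2 + scale t2 x0" "b = b2 + t2 * c" "(y2, b2) \<in> M" unfolding M'_def by blast
    then have "t1 = t2" using extension_coefficient_unique[OF M x0] by metis
    then show "a = b" using e dominated_graphsD(1)[OF M] by auto
  next
    fix x a y b assume "(x, a) \<in> M'" "(y, b) \<in> M'"
    then obtain y1' b1 t1 y2 b2 t2 where e: "x = y1' + scale t1 x0" "a = b1 + t1 * c" "(y1', b1) \<in> M"
      "y = y2 + scale t2 x0" "b = b2 + t2 * c" "(y2, b2) \<in> M" unfolding M'_def by blast
    then show "(x + y, a + b) \<in> M'"
      using inM'[OF dominated_graphsD(2)[OF M e(3,6)], of "t1 + t2"]
      by (simp add: scale_left_distrib algebra_simps)
  next
    fix x a r assume "(x, a) \<in> M'"
    then obtain y b t where e: "x = y + scale t x0" "a = b + t * c" "(y, b) \<in> M"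
      unfolding M'_def by blast
    then show "(scale r x, r * a) \<in> M'"
      using inM'[OF dominated_graphsD(3)[OF M e(3), of r], of "r * t"]
      by (simp add: scale_right_distrib algebra_simps)
  next
    fix x a assume "(x, a) \<in> M'"
    then show "a \<le> p x"
      unfolding M'_def using extended_graph_dominated[OF M lower upper] by blast
  next
    show "(y1, p y1) \<in> M'" using inM'[OF dominated_graphsD(5)[OF M], of 0] by simp
  qed
  moreover have "M \<subset> M'"
    using inM'[of _ _ 0] inM'[OF zero_in_dominated_graph[OF M], of 1] x0 by force
  ultimately show ?thesis by blast
qed

theorem real_Hahn_Banach:
  obtains \<psi> where "Vector_Spaces.linear scale (*) \<psi>" "\<And>x. \<psi> x \<le> p x" "\<psi> y1 = p y1"
proof -
  have "\<forall>C\<in>chains (dominated_graphs y1). \<exists>U\<in>dominated_graphs y1. \<forall>X\<in>C. X \<subseteq> U"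
    using line_graph_in_dominated_graphs Union_chain_in_dominated_graphs
    by (metis Union_upper empty_iff)
  then obtain M where M: "M \<in> dominated_graphs y1"
    and maximal: "\<And>X. X \<in> dominated_graphs y1 \<Longrightarrow> M \<subseteq> X \<Longrightarrow> X = M"
    using Zorn_Lemma2 by force
  have total: "\<exists>a. (x, a) \<in> M" for x
    using dominated_graph_extend[OF M, of x] maximal by blast
  define \<psi> where "\<psi> x = (THE a. (x, a) \<in> M)" for x
  have graph: "(x, a) \<in> M \<longleftrightarrow> a = \<psi> x" for x a
    using total[of x] dominated_graphsD(1)[OF M] unfolding \<psi>_def by (metis theI)
  have "Vector_Spaces.linear scale (*) \<psi>"
    unfolding Vector_Spaces.linear_iff
    using vector_space_axioms vector_space_over_itself.vector_space_axioms
      dominated_graphsD(2,3)[OF M] graph by metis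
  moreover have "\<psi> x \<le> p x" for x using dominated_graphsD(4)[OF M] graph by blast
  moreover have "\<psi> y1 = p y1" using dominated_graphsD(5)[OF M] by (simp add: graph)
  ultimately show thesis by (rule that)
qed

end

lemma vector_space_real_scalars:
  assumes "vector_space sY"
  shows "vector_space (\<lambda>r::real. sY (of_real r))"
proof -
  interpret vector_space sY by fact
  show ?thesis by unfold_locales (simp_all add: scale_right_distrib scale_left_distrib)
qed

lemma seminorm_on_zero:
  assumes "vector_space sY" "seminorm_on sY p"
  shows "p 0 = 0"
proof -
  interpret vector_space sY by fact
  show ?thesis using assms(2) unfolding seminorm_on_def by (metis norm_zero mult_zero_left scale_zero_left)
qed

lemma complexification_linear:
  assumes Y: "vector_space sY" and \<psi>: "Vector_Spaces.linear (\<lambda>r. sY (of_real r)) (*) \<psi>"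
  shows "Vector_Spaces.linear sY (*) (\<lambda>x. of_real (\<psi> x) - \<i> * of_real (\<psi> (sY \<i> x)))"
proof -
  interpret vector_space sY by (rule Y)
  have add: "\<psi> (x + y) = \<psi> x + \<psi> y" and real_scale: "\<psi> (sY (of_real r) x) = r * \<psi> x" for x y r
    using \<psi> by (auto simp: Vector_Spaces.linear_iff)
  have complex_scale: "\<psi> (sY a x) = Re a * \<psi> x + Im a * \<psi> (sY \<i> x)" for a x
  proof -
    have "a = of_real (Re a) + of_real (Im a) * \<i>" by (simp add: complex_eq_iff)
    then have "sY a x = sY (of_real (Re a)) x + sY (of_real (Im a)) (sY \<i> x)"
      by (metis scale_left_distrib scale_scale)
    then show ?thesis by (simp add: add real_scale del: scale_scale)
  qed
  have rotated: "\<psi> (sY \<i> (sY a x)) = Re a * \<psi> (sY \<i> x) - Im a * \<psi> x" for a x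
    using complex_scale[of "\<i> * a" x] by simp
  show ?thesis
    unfolding Vector_Spaces.linear_iff
  proof (intro conjI allI Y vector_space_over_itself.vector_space_axioms)
    show "of_real (\<psi> (x + y)) - \<i> * of_real (\<psi> (sY \<i> (x + y))) =
        of_real (\<psi> x) - \<i> * of_real (\<psi> (sY \<i> x)) + (of_real (\<psi> y) - \<i> * of_real (\<psi> (sY \<i> y)))"
      for x y by (simp add: add scale_right_distrib algebra_simps)
    show "of_real (\<psi> (sY a x)) - \<i> * of_real (\<psi> (sY \<i> (sY a x))) =
        a * (of_real (\<psi> x) - \<i> * of_real (\<psi> (sY \<i> x)))" for a x
      unfolding rotated complex_scale[of a x] by (simp add: complex_eq_iff)
  qed
qed

text \<open>Rotate y by a unimodular scalar so that the functional becomes real there.\<close>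
lemma linear_cmod_le_seminorm:
  assumes \<phi>: "Vector_Spaces.linear sY (*) \<phi>" and p: "seminorm_on sY p"
    and Re_le: "\<And>y. Re (\<phi> y) \<le> p y"
  shows "cmod (\<phi> y) \<le> p y"
proof (cases "\<phi> y = 0")
  case True
  then show ?thesis using p by (simp add: seminorm_on_def)
next
  case False
  define \<alpha> where "\<alpha> = cnj (\<phi> y) / of_real (cmod (\<phi> y))"
  have "\<phi> (sY \<alpha> y) = \<phi> y * cnj (\<phi> y) / of_real (cmod (\<phi> y))"
    using \<phi> by (simp add: Vector_Spaces.linear_iff \<alpha>_def)
  also have "\<dots> = of_real (cmod (\<phi> y))"
    using False by (simp add: complex_norm_square[symmetric] power2_eq_square)
  finally have "cmod (\<phi> y) = Re (\<phi> (sY \<alpha> y))" by simp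
  also have "\<dots> \<le> p (sY \<alpha> y)" by (rule Re_le)
  also have "\<dots> = p y" using p False by (simp add: seminorm_on_def \<alpha>_def norm_divide)
  finally show ?thesis .
qed

theorem complex_Hahn_Banach:
  assumes Y: "vector_space sY" and p: "seminorm_on sY p"
  obtains \<phi> where "Vector_Spaces.linear sY (*) \<phi>" "\<And>y. cmod (\<phi> y) \<le> p y" "\<phi> y1 = of_real (p y1)"
proof -
  interpret real_seminormed_space "\<lambda>r. sY (of_real r)" p
    using vector_space_real_scalars[OF Y] p
    by (simp add: real_seminormed_space_def real_seminormed_space_axioms_def seminorm_on_def)
  obtain \<psi> where \<psi>: "Vector_Spaces.linear (\<lambda>r. sY (of_real r)) (*) \<psi>" "\<And>x. \<psi> x \<le> p x" "\<psi> y1 = p y1"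
    using real_Hahn_Banach by blast
  define \<phi> where "\<phi> x = of_real (\<psi> x) - \<i> * of_real (\<psi> (sY \<i> x))" for x
  have lin: "Vector_Spaces.linear sY (*) \<phi>"
    unfolding \<phi>_def by (rule complexification_linear[OF Y \<psi>(1)])
  have bound: "cmod (\<phi> y) \<le> p y" for y
    by (rule linear_cmod_le_seminorm[OF lin p]) (simp add: \<phi>_def \<psi>(2))
  have "Re (\<phi> y1) = p y1" by (simp add: \<phi>_def \<psi>(3))
  then have "Im (\<phi> y1) = 0"
    using bound[of y1] abs_Re_le_cmod[of "\<phi> y1"] by (intro Im_eq_0) linarith
  then have "\<phi> y1 = of_real (p y1)" using \<psi>(3) by (simp add: \<phi>_def complex_eq_iff)
  with lin bound show thesis by (rule that)
qed

lemma istopology_lcs: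
  fixes P :: "'i \<Rightarrow> 'y::ab_group_add \<Rightarrow> real"
  shows "istopology (\<lambda>U. \<forall>y\<in>U. \<exists>F e. finite F \<and> F \<subseteq> I \<and> e > 0 \<and> {z. \<forall>i\<in>F. P i (z - y) < e} \<subseteq> U)"
  unfolding istopology_def
proof (intro conjI allI impI ballI)
  fix S T y
  assume "\<forall>y\<in>S. \<exists>F e. finite F \<and> F \<subseteq> I \<and> e > 0 \<and> {z. \<forall>i\<in>F. P i (z - y) < e} \<subseteq> S"
    and "\<forall>y\<in>T. \<exists>F e. finite F \<and> F \<subseteq> I \<and> e > 0 \<and> {z. \<forall>i\<in>F. P i (z - y) < e} \<subseteq> T"
    and "y \<in> S \<inter> T"
  then obtain F1 e1 F2 e2 where "finite F1" "F1 \<subseteq> I" "e1 > 0" "{z. \<forall>i\<in>F1. P i (z - y) < e1} \<subseteq> S"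
    "finite F2" "F2 \<subseteq> I" "e2 > 0" "{z. \<forall>i\<in>F2. P i (z - y) < e2} \<subseteq> T"
    by (meson IntD1 IntD2)
  then show "\<exists>F e. finite F \<and> F \<subseteq> I \<and> e > 0 \<and> {z. \<forall>i\<in>F. P i (z - y) < e} \<subseteq> S \<inter> T"
    by (intro exI[of _ "F1 \<union> F2"] exI[of _ "min e1 e2"]) auto
next
  fix \<K> y
  assume "\<forall>K\<in>\<K>. \<forall>y\<in>K. \<exists>F e. finite F \<and> F \<subseteq> I \<and> e > 0 \<and> {z. \<forall>i\<in>F. P i (z - y) < e} \<subseteq> K"
    and "y \<in> \<Union>\<K>"
  then show "\<exists>F e. finite F \<and> F \<subseteq> I \<and> e > 0 \<and> {z. \<forall>i\<in>F. P i (z - y) < e} \<subseteq> \<Union>\<K>"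
    by (meson Union_iff subset_iff)
qed

lemma openin_lcs: "openin (lcs_topology I P) U \<longleftrightarrow>
   (\<forall>y\<in>U. \<exists>F e. finite F \<and> F \<subseteq> I \<and> e > 0 \<and> {z. \<forall>i\<in>F. P i (z - y) < e} \<subseteq> U)"
  by (simp only: lcs_topology_def topology_inverse'[OF istopology_lcs])

lemma topspace_lcs: "topspace (lcs_topology I P) = UNIV"
proof -
  have "openin (lcs_topology I P) UNIV"
    unfolding openin_lcs by (intro ballI exI[of _ "{}"] exI[of _ "1::real"]) auto
  then show ?thesis using openin_subset by blast
qed

lemma dominated_linear_in_dual_space:
  assumes Y: "vector_space sY" and p: "seminorm_on sY p"
    and p_cont: "continuous_map (lcs_topology I P) euclideanreal p"
    and \<phi>: "Vector_Spaces.linear sY (*) \<phi>" and bound: "\<And>y. cmod (\<phi> y) \<le> p y"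
  shows "\<phi> \<in> dual_space sY I P"
proof -
  have "openin (lcs_topology I P) {x. \<phi> x \<in> U}" if U: "open U" for U
    unfolding openin_lcs
  proof
    fix y assume "y \<in> {x. \<phi> x \<in> U}"
    then obtain e where e: "e > 0" "ball (\<phi> y) e \<subseteq> U" using U open_contains_ball by blast
    have "openin (lcs_topology I P) {x. p x < e}"
      using openin_continuous_map_preimage[OF p_cont, of "{..<e}"] by (simp add: topspace_lcs)
    moreover have "0 \<in> {x. p x < e}" using seminorm_on_zero[OF Y p] e by simp
    ultimately obtain F e' where F: "finite F" "F \<subseteq> I" "e' > 0"
      "{z. \<forall>i\<in>F. P i (z - 0) < e'} \<subseteq> {x. p x < e}"
      unfolding openin_lcs by meson
    have "\<phi> z \<in> U" if "\<forall>i\<in>F. P i (z - y) < e'" for z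
    proof -
      have "p (z - y) < e" using subsetD[OF F(4), of "z - y"] that by simp
      then have "cmod (\<phi> z - \<phi> y) < e"
        using bound[of "z - y"] module_hom.diff[OF \<phi>[unfolded linear_iff_module_hom], of z y]
        by (metis order_le_less_trans)
      then show ?thesis using e(2) by (auto simp: dist_norm norm_minus_commute)
    qed
    then have "{z. \<forall>i\<in>F. P i (z - y) < e'} \<subseteq> {x. \<phi> x \<in> U}" by blast
    with F(1-3) show "\<exists>F e. finite F \<and> F \<subseteq> I \<and> e > 0 \<and> {z. \<forall>i\<in>F. P i (z - y) < e} \<subseteq> {x. \<phi> x \<in> U}"
      by blast
  qed
  then have "continuous_map (lcs_topology I P) euclidean \<phi>"
    unfolding continuous_map_def topspace_lcs by simp
  with \<phi> show ?thesis by (simp add: dual_space_def)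
qed

lemma lcs_interior_of_eq_empty_if_ray_escapes:
  assumes seminorms: "\<forall>i\<in>I. seminorm_on sY (P i)"
    and escape: "\<And>y \<epsilon>. y \<in> H \<Longrightarrow> \<epsilon> > 0 \<Longrightarrow> y + sY (of_real \<epsilon>) d \<notin> H"
  shows "(lcs_topology I P) interior_of H = {}"
proof (rule ccontr)
  assume "(lcs_topology I P) interior_of H \<noteq> {}"
  then obtain y where y: "y \<in> (lcs_topology I P) interior_of H" by blast
  then have "\<exists>F e. finite F \<and> F \<subseteq> I \<and> e > 0 \<and>
      {z. \<forall>i\<in>F. P i (z - y) < e} \<subseteq> (lcs_topology I P) interior_of H"
    using openin_lcs[THEN iffD1, OF openin_interior_of] by (rule bspec[rotated])
  then obtain F e where F: "finite F" "F \<subseteq> I" "e > 0"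
    "{z. \<forall>i\<in>F. P i (z - y) < e} \<subseteq> (lcs_topology I P) interior_of H"
    by (elim exE conjE) (rule that)
  define K where "K = (\<Sum>i\<in>F. P i d)"
  have P_nonneg: "0 \<le> P i d" if "i \<in> F" for i
    using seminorms F(2) that by (auto simp: seminorm_on_def)
  have K_nonneg: "0 \<le> K"
    unfolding K_def by (rule sum_nonneg) (rule P_nonneg)
  have K: "P i d \<le> K" if "i \<in> F" for i
    unfolding K_def by (rule member_le_sum[OF that P_nonneg F(1)]) simp
  define \<epsilon> where "\<epsilon> = e / (K + 1)"
  have \<epsilon>: "\<epsilon> > 0" "\<epsilon> * K < e"
    using F(3) K_nonneg by (simp_all add: \<epsilon>_def field_simps)
  have "P i (y + sY (of_real \<epsilon>) d - y) < e" if "i \<in> F" for i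
  proof -
    have "P i (y + sY (of_real \<epsilon>) d - y) = \<epsilon> * P i d"
      using seminorms F(2) that \<epsilon>(1) by (auto simp: seminorm_on_def)
    also have "\<dots> \<le> \<epsilon> * K" using K[OF that] \<epsilon>(1) by simp
    finally show ?thesis using \<epsilon>(2) by simp
  qed
  then have "y + sY (of_real \<epsilon>) d \<in> (lcs_topology I P) interior_of H"
    using F(4) by (simp add: subset_iff)
  moreover have "y \<in> H" using y interior_of_subset by fast
  ultimately show False using escape[OF _ \<epsilon>(1)] interior_of_subset by fast
qed

lemma lcs_interior_of_linear_level_set:
  assumes "\<forall>i\<in>I. seminorm_on sY (P i)" and \<phi>: "Vector_Spaces.linear sY (*) \<phi>" and "\<phi> d \<noteq> 0"
  shows "(lcs_topology I P) interior_of {y. \<phi> y = \<alpha>} = {}"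
proof (rule lcs_interior_of_eq_empty_if_ray_escapes[OF assms(1)])
  fix y and \<epsilon> :: real assume "y \<in> {y. \<phi> y = \<alpha>}" "\<epsilon> > 0"
  moreover have "\<phi> (y + sY (of_real \<epsilon>) d) = \<phi> y + of_real \<epsilon> * \<phi> d"
    using \<phi> by (simp add: Vector_Spaces.linear_iff)
  ultimately show "y + sY (of_real \<epsilon>) d \<notin> {y. \<phi> y = \<alpha>}"
    using \<open>\<phi> d \<noteq> 0\<close> by simp
qed

lemma lcs_interior_of_seminorm_kernel:
  assumes "\<forall>i\<in>I. seminorm_on sY (P i)" and Y: "vector_space sY" and p: "seminorm_on sY p"
    and "p d \<noteq> 0"
  shows "(lcs_topology I P) interior_of {y. p y = 0} = {}"
proof (rule lcs_interior_of_eq_empty_if_ray_escapes[OF assms(1)])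
  interpret vector_space sY by (rule Y)
  fix y and \<epsilon> :: real assume "y \<in> {y. p y = 0}" and \<epsilon>: "\<epsilon> > 0"
  moreover have "p (sY (-1) y) = cmod (-1) * p y" using p unfolding seminorm_on_def by blast
  ultimately have y: "p (sY (-1) y) = 0" by simp
  have "0 \<le> p d" using p unfolding seminorm_on_def by blast
  then have pos: "0 < \<epsilon> * p d" using \<epsilon> \<open>p d \<noteq> 0\<close> by (simp add: zero_less_mult_iff less_le)
  have "\<epsilon> * p d = p (sY (of_real \<epsilon>) d)"
    using p \<epsilon> by (simp add: seminorm_on_def)
  also have "sY (of_real \<epsilon>) d = (y + sY (of_real \<epsilon>) d) + sY (-1) y" by simp
  also have "p \<dots> \<le> p (y + sY (of_real \<epsilon>) d) + p (sY (-1) y)"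
    using p unfolding seminorm_on_def by blast
  finally have "\<epsilon> * p d \<le> p (y + sY (of_real \<epsilon>) d)" using y by simp
  with pos show "y + sY (of_real \<epsilon>) d \<notin> {y. p y = 0}" by simp
qed

lemma dependent_pair_imp_multiple:
  assumes X: "vector_space sX" and u: "u \<noteq> 0" and dep: "\<not> (u \<noteq> w \<and> \<not> module.dependent sX {u, w})"
  obtains \<beta> where "w = sX \<beta> u"
proof -
  interpret X: vector_space sX by (rule X)
  have "w \<in> X.span {u}"
  proof (cases "u = w \<or> w = 0")
    case True
    then show ?thesis by (auto intro: X.span_base X.span_zero)
  next
    case False
    then have "X.dependent (insert w {u})" using dep by (auto simp: insert_commute)
    then show ?thesis using X.dependent_insertD[of w "{u}"] u by auto
  qed
  then show thesis using that by (auto simp: X.span_singleton)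
qed

locale line_holomorphic = X: vector_space sX for sX :: "complex \<Rightarrow> 'x::ab_group_add \<Rightarrow> 'x" +
  fixes \<Omega> :: "'x set" and g :: "'x \<Rightarrow> complex"
  assumes two_open_domain: "two_open sX \<Omega>"
    and holomorphic_near: "\<And>a v. a \<in> \<Omega> \<Longrightarrow>
      \<exists>r>0. (\<forall>z\<in>ball 0 r. a + sX z v \<in> \<Omega>) \<and> (\<lambda>z. g (a + sX z v)) holomorphic_on ball 0 r"
begin

lemma open_line_section: "v \<noteq> 0 \<Longrightarrow> open {z. a + sX z v \<in> \<Omega>}"
  using two_open_domain by (simp add: two_open_def one_open_def)

lemma holomorphic_on_line_section: "(\<lambda>z. g (a + sX z v)) holomorphic_on {z. a + sX z v \<in> \<Omega>}"
  unfolding holomorphic_on_def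
proof
  fix z0 assume "z0 \<in> {z. a + sX z v \<in> \<Omega>}"
  then obtain r where r: "r > 0" and h: "(\<lambda>z. g (a + sX z0 v + sX z v)) holomorphic_on ball 0 r"
    using holomorphic_near[of "a + sX z0 v" v] by auto
  have shift: "(\<lambda>z. g (a + sX z v)) = (\<lambda>z. g (a + sX z0 v + sX z v)) \<circ> (\<lambda>z. z - z0)"
    by (auto simp: fun_eq_iff X.scale_left_diff_distrib algebra_simps)
  have image: "(\<lambda>z. z - z0) ` ball z0 r \<subseteq> ball 0 r" by (auto simp: dist_norm norm_minus_commute)
  have "(\<lambda>z. z - z0) holomorphic_on ball z0 r" by (intro holomorphic_intros)
  then have "(\<lambda>z. g (a + sX z v)) holomorphic_on ball z0 r"
    unfolding shift by (rule holomorphic_on_compose[OF _ holomorphic_on_subset[OF h image]])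
  then have "(\<lambda>z. g (a + sX z v)) field_differentiable at z0"
    using r by (simp add: holomorphic_on_imp_differentiable_at)
  then show "(\<lambda>z. g (a + sX z v)) field_differentiable at z0 within {z. a + sX z v \<in> \<Omega>}"
    by (rule field_differentiable_at_within)
qed

text \<open>Perturbing the direction of a segment in \<Omega> keeps it in \<Omega>; this is where
  2-openness is needed, through the plane spanned by u and w.\<close>
lemma segment_perturbation:
  assumes u: "u \<noteq> 0" and seg: "\<And>s. s \<in> {0..1} \<Longrightarrow> x + sX (of_real s) u \<in> \<Omega>"
  obtains \<delta> where "\<delta> > 0" "\<And>t s. cmod t < \<delta> \<Longrightarrow> s \<in> {0..1} \<Longrightarrow> x + sX (of_real s) (u + sX t w) \<in> \<Omega>"
proof (cases "u \<noteq> w \<and> \<not> X.dependent {u, w}")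
  case True
  define W where "W = {q. x + sX (fst q) u + sX (snd q) w \<in> \<Omega>}"
  have "compact ((\<lambda>s::real. (complex_of_real s, 0::complex)) ` {0..1})"
    by (intro compact_continuous_image continuous_intros) auto
  moreover have "open W" using two_open_domain True unfolding two_open_def W_def by blast
  moreover have "(\<lambda>s::real. (complex_of_real s, 0::complex)) ` {0..1} \<subseteq> W"
    using seg by (auto simp: W_def)
  ultimately obtain \<epsilon> where \<epsilon>: "\<epsilon> > 0"
    "(\<Union>q\<in>(\<lambda>s::real. (complex_of_real s, 0::complex)) ` {0..1}. ball q \<epsilon>) \<subseteq> W"
    by (rule compact_subset_open_imp_ball_epsilon_subset)
  show thesis
  proof (rule that[OF \<epsilon>(1)])
    fix t s assume t: "cmod t < \<epsilon>" and s: "s \<in> {0..1::real}"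
    have "dist (complex_of_real s, 0) (of_real s, of_real s * t) \<le> cmod t"
      using s by (simp add: dist_Pair_Pair dist_norm norm_mult mult_left_le_one_le)
    then have "(of_real s, of_real s * t) \<in> W" using \<epsilon>(2) s t by force
    then show "x + sX (of_real s) (u + sX t w) \<in> \<Omega>"
      unfolding W_def by (simp add: X.scale_right_distrib add.assoc)
  qed
next
  case False
  obtain \<beta> where \<beta>: "w = sX \<beta> u"
    using dependent_pair_imp_multiple[OF X.vector_space_axioms u False] by blast
  define L where "L = {z. x + sX z u \<in> \<Omega>}"
  have "compact (complex_of_real ` {0..1})"
    by (intro compact_continuous_image continuous_intros) auto
  moreover have "open L" unfolding L_def using open_line_section[OF u] .
  moreover have "complex_of_real ` {0..1} \<subseteq> L" using seg by (auto simp: L_def)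
  ultimately obtain \<epsilon> where \<epsilon>: "\<epsilon> > 0" "(\<Union>q\<in>complex_of_real ` {0..1}. ball q \<epsilon>) \<subseteq> L"
    by (rule compact_subset_open_imp_ball_epsilon_subset)
  show thesis
  proof (rule that[of "\<epsilon> / (cmod \<beta> + 1)"])
    show "\<epsilon> / (cmod \<beta> + 1) > 0" using \<epsilon>(1) by (simp add: add_nonneg_pos)
    fix t s assume t: "cmod t < \<epsilon> / (cmod \<beta> + 1)" and s: "s \<in> {0..1::real}"
    have "cmod t * cmod \<beta> \<le> cmod t * (cmod \<beta> + 1)" by (simp add: mult_left_mono)
    also have "\<dots> < \<epsilon>"
      using t pos_less_divide_eq[of "cmod \<beta> + 1" "cmod t" \<epsilon>] by (simp add: add_nonneg_pos)
    finally have "cmod t * cmod \<beta> < \<epsilon>" .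
    moreover have "dist (complex_of_real s) (of_real s * (1 + t * \<beta>)) \<le> cmod t * cmod \<beta>"
      using s by (simp add: dist_norm algebra_simps norm_mult mult_left_le_one_le)
    ultimately have "of_real s * (1 + t * \<beta>) \<in> L" using \<epsilon>(2) s by force
    moreover have "sX (of_real s) (u + sX t w) = sX (of_real s * (1 + t * \<beta>)) u"
      unfolding \<beta> by (simp add: X.scale_right_distrib X.scale_left_distrib algebra_simps)
    ultimately show "x + sX (of_real s) (u + sX t w) \<in> \<Omega>" unfolding L_def by simp
  qed
qed

lemma eq_const_along_segment:
  assumes v: "v \<noteq> 0" and seg: "\<And>s. s \<in> {0..1} \<Longrightarrow> x + sX (of_real s) v \<in> \<Omega>"
    and r: "r > 0" "\<And>t. t \<in> ball 0 r \<Longrightarrow> g (x + sX t v) = K"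
  shows "g (x + v) = K"
proof -
  define L where "L = {z. x + sX z v \<in> \<Omega>}"
  define C where "C = connected_component_set L 0"
  have "open C" unfolding C_def L_def using open_line_section[OF v] by (rule open_connected_component)
  have "0 \<in> complex_of_real ` {0..1}" by force
  moreover have "connected (complex_of_real ` {0..1})"
    by (intro connected_continuous_image continuous_intros) auto
  ultimately have "complex_of_real ` {0..1} \<subseteq> C"
    unfolding C_def by (rule connected_component_maximal) (auto simp: L_def seg)
  then have "complex_of_real 0 \<in> C" "complex_of_real 1 \<in> C" by auto
  then have "0 \<in> C" "1 \<in> C" by simp_all
  have "connected C" unfolding C_def by simp
  have "C \<subseteq> L" unfolding C_def by (rule connected_component_subset)
  then have hol: "(\<lambda>z. g (x + sX z v)) holomorphic_on C"
    unfolding L_def by (rule holomorphic_on_subset[OF holomorphic_on_line_section])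
  have "(\<lambda>z. g (x + sX z v)) 1 = (\<lambda>_. K) 1"
  proof (rule analytic_continuation_open[of "C \<inter> ball 0 r" C "\<lambda>z. g (x + sX z v)" "\<lambda>_. K"])
    show "C \<inter> ball 0 r \<noteq> {}" using \<open>0 \<in> C\<close> r(1) by force
    show "(\<lambda>_. K) holomorphic_on C" by (rule holomorphic_on_const)
    show "g (x + sX z v) = K" if "z \<in> C \<inter> ball 0 r" for z using r(2) that by blast
  qed (use \<open>open C\<close> \<open>connected C\<close> \<open>1 \<in> C\<close> hol in auto)
  then show ?thesis by simp
qed

definition locally_const_on_lines :: "complex \<Rightarrow> 'x \<Rightarrow> bool" where
  "locally_const_on_lines K x \<longleftrightarrow> (\<forall>w. \<exists>r>0. \<forall>t\<in>ball 0 r. g (x + sX t w) = K)"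

lemma locally_const_on_lines_value: "locally_const_on_lines K x \<Longrightarrow> g x = K"
  unfolding locally_const_on_lines_def by (metis X.scale_zero_left add.right_neutral centre_in_ball)

lemma locally_const_on_lines_segment:
  assumes x: "locally_const_on_lines K x" and seg: "\<And>s. s \<in> {0..1} \<Longrightarrow> x + sX (of_real s) u \<in> \<Omega>"
  shows "locally_const_on_lines K (x + u)"
proof (cases "u = 0")
  case True
  then show ?thesis using x by simp
next
  case False
  show ?thesis unfolding locally_const_on_lines_def
  proof
    fix w
    obtain \<delta> where \<delta>: "\<delta> > 0" "\<And>t s. cmod t < \<delta> \<Longrightarrow> s \<in> {0..1} \<Longrightarrow> x + sX (of_real s) (u + sX t w) \<in> \<Omega>"
      using segment_perturbation[OF False seg, of w] by blast
    have "g (x + (u + sX t w)) = K" if "cmod t < \<delta>" for t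
    proof (cases "u + sX t w = 0")
      case True
      then show ?thesis using locally_const_on_lines_value[OF x] by simp
    next
      case False
      obtain r where "r > 0" "\<forall>z\<in>ball 0 r. g (x + sX z (u + sX t w)) = K"
        using x unfolding locally_const_on_lines_def by blast
      then show ?thesis using eq_const_along_segment[OF False \<delta>(2)[OF that]] by blast
    qed
    then have "\<forall>t\<in>ball 0 \<delta>. g (x + u + sX t w) = K" by (simp add: add.assoc)
    then show "\<exists>r>0. \<forall>t\<in>ball 0 r. g (x + u + sX t w) = K" using \<delta>(1) by blast
  qed
qed

lemma locally_const_on_lines_at_local_max:
  assumes c: "c \<in> \<Omega>" and U: "one_open sX U" "c \<in> U"
    and max: "\<And>x. x \<in> U \<inter> \<Omega> \<Longrightarrow> cmod (g x) \<le> cmod (g c)"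
  shows "locally_const_on_lines (g c) c"
  unfolding locally_const_on_lines_def
proof
  fix w
  show "\<exists>r>0. \<forall>t\<in>ball 0 r. g (c + sX t w) = g c"
  proof (cases "w = 0")
    case True
    then show ?thesis by (auto intro!: exI[of _ 1])
  next
    case False
    have "open ({z. c + sX z w \<in> \<Omega>} \<inter> {z. c + sX z w \<in> U})"
      using open_line_section[OF False] U(1) False unfolding one_open_def by blast
    moreover have "0 \<in> {z. c + sX z w \<in> \<Omega>} \<inter> {z. c + sX z w \<in> U}" using c U(2) by simp
    ultimately obtain r where r: "r > 0" "ball 0 r \<subseteq> {z. c + sX z w \<in> \<Omega>} \<inter> {z. c + sX z w \<in> U}"
      by (meson open_contains_ball)
    have "(\<lambda>z. g (c + sX z w)) holomorphic_on ball 0 r"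
      using holomorphic_on_subset[OF holomorphic_on_line_section] r(2) by blast
    moreover have "cmod (g (c + sX z w)) \<le> cmod (g (c + sX 0 w))" if "z \<in> ball 0 r" for z
    proof -
      have "c + sX z w \<in> U \<inter> \<Omega>" using r(2) that by blast
      then show ?thesis using max by simp
    qed
    ultimately have "(\<lambda>z. g (c + sX z w)) constant_on ball 0 r"
      using r(1) by (intro maximum_modulus_principle[of _ _ "ball 0 r" 0]) auto
    then show ?thesis
      using r(1) unfolding constant_on_def by (metis X.scale_zero_left add.right_neutral centre_in_ball)
  qed
qed

theorem maximum_modulus_on_lines:
  assumes conn: "polygonally_connected sX \<Omega>" and c: "c \<in> \<Omega>" and U: "one_open sX U" "c \<in> U"
    and max: "\<And>x. x \<in> U \<inter> \<Omega> \<Longrightarrow> cmod (g x) \<le> cmod (g c)" and x: "x \<in> \<Omega>"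
  shows "g x = g c"
proof -
  obtain xs where xs: "xs \<noteq> []" "hd xs = c" "last xs = x"
    and edges: "\<forall>k < length xs - 1. \<forall>t::real. 0 \<le> t \<and> t \<le> 1 \<longrightarrow>
        xs ! k + sX (complex_of_real t) (xs ! Suc k - xs ! k) \<in> \<Omega>"
    using conn c x unfolding polygonally_connected_def by blast
  have "locally_const_on_lines (g c) (xs ! k)" if "k < length xs" for k
    using that
  proof (induction k)
    case 0
    then show ?case using xs(1,2) locally_const_on_lines_at_local_max[OF c U max]
      by (simp add: hd_conv_nth)
  next
    case (Suc k)
    then have "locally_const_on_lines (g c) (xs ! k + (xs ! Suc k - xs ! k))"
      using edges by (intro locally_const_on_lines_segment) auto
    then show ?case by simp
  qed
  then have "locally_const_on_lines (g c) (last xs)"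
    using xs(1) by (simp add: last_conv_nth)
  then show ?thesis using xs(3) locally_const_on_lines_value by blast
qed

end

lemma line_holomorphic_dual_comp:
  assumes "vector_space sX" "two_open sX \<Omega>" "gateaux_holomorphic sX sY I P \<Omega> f"
    and "\<phi> \<in> dual_space sY I P"
  shows "line_holomorphic sX \<Omega> (\<lambda>x. \<phi> (f x))"
  using assms unfolding line_holomorphic_def line_holomorphic_axioms_def gateaux_holomorphic_def
  by blast

lemma interior_of_closure_of_eq_empty:
  assumes "closedin X H" "S \<subseteq> H" "X interior_of H = {}"
  shows "X interior_of (X closure_of S) = {}"
  using assms interior_of_mono[OF closure_of_minimal[OF assms(2,1)]] by blast

locale seminorm_local_max =
  X: vector_space sX + Y: vector_space sY
  for sX :: "complex \<Rightarrow> 'x::ab_group_add \<Rightarrow> 'x" and sY :: "complex \<Rightarrow> 'y::ab_group_add \<Rightarrow> 'y" +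
  fixes I :: "'i set" and P :: "'i \<Rightarrow> 'y \<Rightarrow> real" and \<Omega> :: "'x set" and f :: "'x \<Rightarrow> 'y"
    and p :: "'y \<Rightarrow> real" and c :: 'x and U :: "'x set"
  assumes seminorms: "\<forall>i\<in>I. seminorm_on sY (P i)"
    and two_open_domain: "two_open sX \<Omega>"
    and polygonally_connected_domain: "polygonally_connected sX \<Omega>"
    and holomorphic: "gateaux_holomorphic sX sY I P \<Omega> f"
    and seminorm: "seminorm_on sY p"
    and continuous: "continuous_map (lcs_topology I P) euclideanreal p"
    and centre: "c \<in> \<Omega>" and neighbourhood: "one_open sX U" "c \<in> U"
    and local_max: "\<And>x. x \<in> U \<inter> \<Omega> \<Longrightarrow> p (f x) \<le> p (f c)"
begin

lemma p_nonneg: "0 \<le> p y"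
  using seminorm by (simp add: seminorm_on_def)

lemma dominated_functional_constant:
  assumes \<phi>: "Vector_Spaces.linear sY (*) \<phi>" and bound: "\<And>y. cmod (\<phi> y) \<le> p y"
    and attained: "cmod (\<phi> (f c)) = p (f c)" and x: "x \<in> \<Omega>"
  shows "\<phi> (f x) = \<phi> (f c)"
proof -
  have "\<phi> \<in> dual_space sY I P"
    by (rule dominated_linear_in_dual_space[OF Y.vector_space_axioms seminorm continuous \<phi> bound])
  then interpret line_holomorphic sX \<Omega> "\<lambda>x. \<phi> (f x)"
    by (rule line_holomorphic_dual_comp[OF X.vector_space_axioms two_open_domain holomorphic])
  show ?thesis
  proof (rule maximum_modulus_on_lines[OF polygonally_connected_domain centre neighbourhood _ x])
    fix x assume x: "x \<in> U \<inter> \<Omega>"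
    have "cmod (\<phi> (f x)) \<le> p (f c)" using bound[of "f x"] local_max[OF x] by linarith
    then show "cmod (\<phi> (f x)) \<le> cmod (\<phi> (f c))" using attained by simp
  qed
qed

lemma positive_max_level_set:
  assumes "p (f c) > 0"
  obtains \<phi> where "\<phi> \<in> dual_space sY I P" "Vector_Spaces.linear sY (*) \<phi>"
    "\<And>y. cmod (\<phi> y) \<le> p y" "\<And>x. x \<in> \<Omega> \<Longrightarrow> \<phi> (f x) = of_real (p (f c))"
proof -
  obtain \<phi> where \<phi>: "Vector_Spaces.linear sY (*) \<phi>" "\<And>y. cmod (\<phi> y) \<le> p y"
    and \<phi>c: "\<phi> (f c) = of_real (p (f c))"
    using complex_Hahn_Banach[OF Y.vector_space_axioms seminorm] by blast
  show thesis
  proof (rule that[OF dominated_linear_in_dual_space[OF Y.vector_space_axioms seminorm continuous \<phi>] \<phi>])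
    show "\<phi> (f x) = of_real (p (f c))" if "x \<in> \<Omega>" for x
      using dominated_functional_constant[OF \<phi> _ that] \<phi>c p_nonneg by simp
  qed
qed

lemma zero_max_imp_vanishing:
  assumes "p (f c) = 0" and x: "x \<in> \<Omega>"
  shows "p (f x) = 0"
proof -
  obtain \<phi> where \<phi>: "Vector_Spaces.linear sY (*) \<phi>" "\<And>y. cmod (\<phi> y) \<le> p y"
    and \<phi>x: "\<phi> (f x) = of_real (p (f x))"
    using complex_Hahn_Banach[OF Y.vector_space_axioms seminorm] by blast
  have "cmod (\<phi> (f c)) = p (f c)" using \<phi>(2)[of "f c"] assms(1) by simp
  then have "\<phi> (f x) = 0" using dominated_functional_constant[OF \<phi> _ x] assms(1) by simp
  then show ?thesis using \<phi>x by simp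
qed

lemma local_max_is_global_min:
  assumes x: "x \<in> \<Omega>"
  shows "p (f c) \<le> p (f x)"
proof (cases "p (f c) > 0")
  case True
  then obtain \<phi> where "\<phi> \<in> dual_space sY I P" "Vector_Spaces.linear sY (*) \<phi>"
    and bound: "\<And>y. cmod (\<phi> y) \<le> p y" and level: "\<And>x. x \<in> \<Omega> \<Longrightarrow> \<phi> (f x) = of_real (p (f c))"
    using positive_max_level_set[OF True] by blast
  have "p (f c) = cmod (\<phi> (f x))" using level[OF x] True by simp
  also have "\<dots> \<le> p (f x)" by (rule bound)
  finally show ?thesis .
next
  case False
  then show ?thesis using p_nonneg[of "f x"] by simp
qed

lemma interior_of_closure_of_image_empty:
  assumes p_nonzero: "p d \<noteq> 0"
  shows "(lcs_topology I P) interior_of ((lcs_topology I P) closure_of (f ` \<Omega>)) = {}"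
proof (cases "p (f c) > 0")
  case True
  then obtain \<phi> where \<phi>: "\<phi> \<in> dual_space sY I P" "Vector_Spaces.linear sY (*) \<phi>"
    and "\<And>y. cmod (\<phi> y) \<le> p y" and level: "\<And>x. x \<in> \<Omega> \<Longrightarrow> \<phi> (f x) = of_real (p (f c))"
    using positive_max_level_set[OF True] by blast
  have "closedin (lcs_topology I P) {y. \<phi> y = of_real (p (f c))}"
    using closedin_continuous_map_preimage[of "lcs_topology I P" euclidean \<phi> "{of_real (p (f c))}"] \<phi>(1)
    by (simp add: dual_space_def topspace_lcs)
  moreover have "\<phi> (f c) \<noteq> 0" using level[OF centre] True by simp
  ultimately show ?thesis
    using level lcs_interior_of_linear_level_set[OF seminorms \<phi>(2)]
    by (intro interior_of_closure_of_eq_empty[of _ "{y. \<phi> y = of_real (p (f c))}"]) auto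
next
  case False
  then have "p (f c) = 0" using p_nonneg[of "f c"] by simp
  have "closedin (lcs_topology I P) {y. p y = 0}"
    using closedin_continuous_map_preimage[OF continuous, of "{0}"] by (simp add: topspace_lcs)
  then show ?thesis
    using zero_max_imp_vanishing[OF \<open>p (f c) = 0\<close>]
      lcs_interior_of_seminorm_kernel[OF seminorms Y.vector_space_axioms seminorm p_nonzero]
    by (intro interior_of_closure_of_eq_empty[of _ "{y. p y = 0}"]) auto
qed

end

theorem mainTheorem6:
  fixes sX :: "complex \<Rightarrow> 'x::ab_group_add \<Rightarrow> 'x"
    and sY :: "complex \<Rightarrow> 'y::ab_group_add \<Rightarrow> 'y"
    and I :: "'i set" and P :: "'i \<Rightarrow> 'y \<Rightarrow> real"
    and \<Omega> :: "'x set" and f :: "'x \<Rightarrow> 'y" and p :: "'y \<Rightarrow> real" and c :: 'x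
  assumes X: "Vector_Spaces.vector_space sX"
    and dimX: "\<exists>u v. u \<noteq> v \<and> \<not> module.dependent sX {u, v}"
    and Y: "lcs sY I P"
    and Y_Hausdorff: "Hausdorff_space (lcs_topology I P)"
    and Y_complete: "seq_complete_lcs I P"
    and Y_nontriv: "\<exists>y::'y. y \<noteq> 0"
    and \<Omega>_open: "two_open sX \<Omega>"
    and \<Omega>_conn: "polygonally_connected sX \<Omega>"
    and f_hol: "gateaux_holomorphic sX sY I P \<Omega> f"
    and p_seminorm: "seminorm_on sY p"
    and p_cont: "continuous_map (lcs_topology I P) euclideanreal p"
    and p_nonzero: "\<exists>y. p y \<noteq> 0"
    and c_in: "c \<in> \<Omega>"
    and c_locmax: "\<exists>U. one_open sX U \<and> c \<in> U \<and> (\<forall>x\<in>U \<inter> \<Omega>. p (f x) \<le> p (f c))"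
  shows "(\<forall>x\<in>\<Omega>. p (f c) \<le> p (f x))
       \<and> (lcs_topology I P) interior_of ((lcs_topology I P) closure_of (f ` \<Omega>)) = {}
       \<and> (p (f c) > 0 \<longrightarrow> 0 \<notin> f ` \<Omega>)"
proof -
  obtain U where U: "one_open sX U" "c \<in> U" "\<forall>x\<in>U \<inter> \<Omega>. p (f x) \<le> p (f c)"
    using c_locmax by blast
  interpret seminorm_local_max sX sY I P \<Omega> f p c U
    using X Y \<Omega>_open \<Omega>_conn f_hol p_seminorm p_cont c_in U
    by (simp add: seminorm_local_max_def seminorm_local_max_axioms_def lcs_def)
  obtain d where "p d \<noteq> 0" using p_nonzero by blast
  have "p 0 = 0" by (rule seminorm_on_zero[OF Y.vector_space_axioms p_seminorm])
  then show ?thesis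
    using local_max_is_global_min interior_of_closure_of_image_empty[OF \<open>p d \<noteq> 0\<close>] by fastforce
qed

end
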